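(* Let $Q$ be an ice fork with point of return $r$, let $j\neq r$ be a mutable vertex, and let $k\ne j$ be another mutable vertex. If $k$ is red or green in $Q$, then $k$ is red or green in $\mu_j(Q)$.
   Context: A quiver is a finite directed multigraph with no loops and no oriented 2-cycles, whose vertex set is partitioned into mutable and frozen vertices; arrows between two frozen vertices are ignored. $b_{ik}$ = number of arrows $i\to k$ minus number of arrows $k\to i$; $Q|_S$ is the induced subquiver on $S$; $[n]$ is the set of mutable vertices. Mutation $\mu_j$ at mutable $j$: for each path $i\to j\to k$ add $b_{ij}b_{jk}$ arrows $i\to k$, reverse all arrows at $j$, cancel 2-cycles. Abundant: at least 2 arrows between every pair of vertices at least one of which is mutable. $F^+(r)=\{i: r\to i\}$, $F^-(r)=\{j:j\to r\}$. A fork is an abundant non-acyclic quiver with at most one frozen vertex and a vertex $r$ (point of return) such that $b_{ij}>b_{ri}$ and $b_{ij}>b_{jr}$ for all $i\in F^+(r),j\in F^-(r)$, and the subquivers induced on $F^+(r)$ and $F^-(r)$ are acyclic. An ice fork with point of return $r$ is a quiver with mutable vertices $[n]$ and frozen vertices $u_1,\dots,u_m$ ($m\ge1$) such that each $Q|_{[n]\cup\{u_i\}}$ is a fork with point of return $r$. A mutable vertex adjacent to at least one frozen vertex is red (resp. green) if all arrows between it and frozen vertices point towards (resp. away from) it. *)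

theory Defs
  imports Main
begin

text \<open>A quiver with mutable vertex set M and frozen vertex set F is encoded by its
  (skew-symmetric) exchange matrix b, where b i k = #arrows i->k minus #arrows k->i.
  Since there are no oriented 2-cycles, b determines the quiver. Arrows between two
  frozen vertices are ignored (b is 0 there).\<close>

definition is_quiver :: "'v set \<Rightarrow> 'v set \<Rightarrow> ('v \<Rightarrow> 'v \<Rightarrow> int) \<Rightarrow> bool" where
  "is_quiver M F b \<longleftrightarrow> finite M \<and> finite F \<and> M \<inter> F = {} \<and>
     (\<forall>i k. b i k = - b k i) \<and>
     (\<forall>i k. i \<notin> M \<union> F \<longrightarrow> b i k = 0) \<and>
     (\<forall>i k. i \<in> F \<and> k \<in> F \<longrightarrow> b i k = 0)"

definition restrict_b :: "('v \<Rightarrow> 'v \<Rightarrow> int) \<Rightarrow> 'v set \<Rightarrow> 'v \<Rightarrow> 'v \<Rightarrow> int" where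
  "restrict_b b S i k = (if i \<in> S \<and> k \<in> S then b i k else 0)"

definition arrows_on :: "('v \<Rightarrow> 'v \<Rightarrow> int) \<Rightarrow> 'v set \<Rightarrow> ('v \<times> 'v) set" where
  "arrows_on b S = {(i, k). i \<in> S \<and> k \<in> S \<and> b i k > 0}"

definition abundant :: "'v set \<Rightarrow> 'v set \<Rightarrow> ('v \<Rightarrow> 'v \<Rightarrow> int) \<Rightarrow> bool" where
  "abundant M F b \<longleftrightarrow> (\<forall>i \<in> M \<union> F. \<forall>k \<in> M \<union> F. i \<noteq> k \<and> (i \<in> M \<or> k \<in> M) \<longrightarrow> \<bar>b i k\<bar> \<ge> 2)"

definition Fplus :: "'v set \<Rightarrow> 'v set \<Rightarrow> ('v \<Rightarrow> 'v \<Rightarrow> int) \<Rightarrow> 'v \<Rightarrow> 'v set" where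
  "Fplus M F b r = {i \<in> M \<union> F. b r i > 0}"

definition Fminus :: "'v set \<Rightarrow> 'v set \<Rightarrow> ('v \<Rightarrow> 'v \<Rightarrow> int) \<Rightarrow> 'v \<Rightarrow> 'v set" where
  "Fminus M F b r = {j \<in> M \<union> F. b j r > 0}"

definition is_fork :: "'v set \<Rightarrow> 'v set \<Rightarrow> ('v \<Rightarrow> 'v \<Rightarrow> int) \<Rightarrow> 'v \<Rightarrow> bool" where
  "is_fork M F b r \<longleftrightarrow> is_quiver M F b \<and> abundant M F b \<and>
     \<not> acyclic (arrows_on b (M \<union> F)) \<and> card F \<le> 1 \<and> r \<in> M \<union> F \<and>
     (\<forall>i \<in> Fplus M F b r. \<forall>j \<in> Fminus M F b r. b i j > b r i \<and> b i j > b j r) \<and>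
     acyclic (arrows_on b (Fplus M F b r)) \<and> acyclic (arrows_on b (Fminus M F b r))"

definition is_ice_fork :: "'v set \<Rightarrow> 'v set \<Rightarrow> ('v \<Rightarrow> 'v \<Rightarrow> int) \<Rightarrow> 'v \<Rightarrow> bool" where
  "is_ice_fork M F b r \<longleftrightarrow> is_quiver M F b \<and> F \<noteq> {} \<and>
     (\<forall>u \<in> F. is_fork M {u} (restrict_b b (M \<union> {u})) r)"

definition mutate :: "'v set \<Rightarrow> 'v set \<Rightarrow> ('v \<Rightarrow> 'v \<Rightarrow> int) \<Rightarrow> 'v \<Rightarrow> 'v \<Rightarrow> 'v \<Rightarrow> int" where
  "mutate M F b j i k =
     (if i = j \<or> k = j then - b i k
      else if i \<in> F \<and> k \<in> F then 0
      else b i k + (\<bar>b i j\<bar> * b j k + b i j * \<bar>b j k\<bar>) div 2)"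

definition is_red :: "'v set \<Rightarrow> 'v set \<Rightarrow> ('v \<Rightarrow> 'v \<Rightarrow> int) \<Rightarrow> 'v \<Rightarrow> bool" where
  "is_red M F b k \<longleftrightarrow> k \<in> M \<and> (\<exists>u \<in> F. b k u \<noteq> 0) \<and> (\<forall>u \<in> F. b u k \<ge> 0)"

definition is_green :: "'v set \<Rightarrow> 'v set \<Rightarrow> ('v \<Rightarrow> 'v \<Rightarrow> int) \<Rightarrow> 'v \<Rightarrow> bool" where
  "is_green M F b k \<longleftrightarrow> k \<in> M \<and> (\<exists>u \<in> F. b k u \<noteq> 0) \<and> (\<forall>u \<in> F. b k u \<ge> 0)"

end

theory Submission
  imports Defs
begin

text \<open>Reversing all arrows maps ice forks to ice forks, commutes with mutation and swaps
  red and green, so it suffices to treat a red vertex \<open>k\<close>. Mutation at \<open>j\<close> changes the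
  number of arrows between \<open>k\<close> and a frozen vertex \<open>u\<close> by the signed number of paths
  \<open>k \<rightarrow> j \<rightarrow> u\<close>. If this is nonpositive for every \<open>u\<close>, then \<open>k\<close> stays red. Otherwise
  \<open>v \<rightarrow> k \<rightarrow> j \<rightarrow> v\<close> for some frozen \<open>v\<close>, an oriented triangle, which in a fork must pass
  through the point of return; so \<open>r = k\<close>, or \<open>r = v\<close> and \<open>v\<close> is the only frozen vertex.
  In both cases the fork inequalities make the new paths outnumber the old arrows \<open>u \<rightarrow> k\<close>,
  so \<open>k\<close> becomes green.\<close>

lemma three_cycle_not_acyclic:
  assumes "(x, y) \<in> R" "(y, z) \<in> R" "(z, x) \<in> R"
  shows "\<not> acyclic R"
proof -
  have "(x, z) \<in> R\<^sup>+" using assms(1,2) by (rule trancl_into_trancl[OF r_into_trancl])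
  then have "(x, x) \<in> R\<^sup>+" using assms(3) by (rule trancl_into_trancl)
  then show ?thesis by (auto simp: acyclic_def)
qed

lemma is_quiver_skew: "is_quiver M F b \<Longrightarrow> - b i k = b k i"
  unfolding is_quiver_def by (metis minus_minus)

lemma is_quiver_finite_frozen: "is_quiver M F b \<Longrightarrow> finite F"
  unfolding is_quiver_def by blast

lemma fork_Fplus_or_Fminus:
  assumes fork: "is_fork M F c r" and v: "v \<in> M \<union> F" "v \<noteq> r"
  shows "v \<in> Fplus M F c r \<or> v \<in> Fminus M F c r"
proof -
  have q: "is_quiver M F c" and ab: "abundant M F c" and r: "r \<in> M \<union> F"
    and F1: "card F \<le> 1"
    using fork unfolding is_fork_def by blast+
  have "v \<in> M \<or> r \<in> M"
  proof (rule ccontr)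
    assume "\<not> (v \<in> M \<or> r \<in> M)"
    then have "{v, r} \<subseteq> F" using v r by auto
    then have "card {v, r} \<le> card F" using is_quiver_finite_frozen[OF q] by (simp add: card_mono)
    then show False using v(2) F1 by simp
  qed
  then have "\<bar>c r v\<bar> \<ge> 2" using ab v r unfolding abundant_def by (metis Un_iff)
  then have "c r v > 0 \<or> c v r > 0" using is_quiver_skew[OF q, of v r] by auto
  then show ?thesis using v by (auto simp: Fplus_def Fminus_def)
qed

lemma fork_no_arrow_Fminus_to_Fplus:
  assumes fork: "is_fork M F c r" and "i \<in> Fminus M F c r" "j \<in> Fplus M F c r"
  shows "c i j \<le> 0"
proof -
  have "c r j > 0" using assms(3) by (simp add: Fplus_def)
  moreover have "c j i > c r j" using fork assms(2,3) unfolding is_fork_def by blast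
  moreover have "- c j i = c i j" using fork is_quiver_skew[of M F c] unfolding is_fork_def by blast
  ultimately show ?thesis by linarith
qed

lemma fork_oriented_triangle_through_return:
  assumes fork: "is_fork M F c r"
    and "x \<in> M \<union> F" "y \<in> M \<union> F" "z \<in> M \<union> F"
    and "c x y > 0" "c y z > 0" "c z x > 0"
  shows "r \<in> {x, y, z}"
proof (rule ccontr)
  assume "r \<notin> {x, y, z}"
  then have sides: "v \<in> Fplus M F c r \<or> v \<in> Fminus M F c r" if "v \<in> {x, y, z}" for v
    using fork_Fplus_or_Fminus[OF fork] that assms(2-4) by blast
  have no_cycle_in: "\<not> {x, y, z} \<subseteq> S" if "acyclic (arrows_on c S)" for S
    using three_cycle_not_acyclic[of x y "arrows_on c S" z] that assms(5-7)
    by (auto simp: arrows_on_def)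
  have "acyclic (arrows_on c (Fplus M F c r))" "acyclic (arrows_on c (Fminus M F c r))"
    using fork by (auto simp: is_fork_def)
  then have "\<not> {x, y, z} \<subseteq> Fplus M F c r" "\<not> {x, y, z} \<subseteq> Fminus M F c r"
    using no_cycle_in by blast+
  then consider "x \<in> Fminus M F c r" "y \<in> Fplus M F c r"
    | "y \<in> Fminus M F c r" "z \<in> Fplus M F c r"
    | "z \<in> Fminus M F c r" "x \<in> Fplus M F c r"
    using sides by blast
  then show False
    using fork_no_arrow_Fminus_to_Fplus[OF fork] assms(5-7) by cases force+
qed

lemma ice_fork_fork_at:
  "is_ice_fork M F b r \<Longrightarrow> u \<in> F \<Longrightarrow> is_fork M {u} (restrict_b b (M \<union> {u})) r"
  by (simp add: is_ice_fork_def)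

lemma ice_fork_return_mem: "is_ice_fork M F b r \<Longrightarrow> u \<in> F \<Longrightarrow> r \<in> M \<union> {u}"
  using ice_fork_fork_at unfolding is_fork_def by fastforce

lemma ice_fork_frozen_disjoint: "is_ice_fork M F b r \<Longrightarrow> M \<inter> F = {}"
  unfolding is_ice_fork_def is_quiver_def by blast

lemma ice_fork_frozen_adjacent:
  assumes ice: "is_ice_fork M F b r" and "k \<in> M" "u \<in> F"
  shows "b k u \<noteq> 0"
proof -
  have "abundant M {u} (restrict_b b (M \<union> {u}))"
    using ice_fork_fork_at[OF ice assms(3)] unfolding is_fork_def by blast
  moreover have "k \<noteq> u" using ice_fork_frozen_disjoint[OF ice] assms(2,3) by blast
  ultimately have "\<bar>restrict_b b (M \<union> {u}) k u\<bar> \<ge> 2" using assms(2)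
    unfolding abundant_def by blast
  then show ?thesis using assms(2) by (simp add: restrict_b_def)
qed

lemma ice_fork_return_ineq:
  assumes ice: "is_ice_fork M F b r" and u: "u \<in> F"
    and "i \<in> M \<union> {u}" "j \<in> M \<union> {u}" "b r i > 0" "b j r > 0"
  shows "b i j > b r i \<and> b i j > b j r"
proof -
  let ?c = "restrict_b b (M \<union> {u})"
  have r: "r \<in> M \<union> {u}" using ice_fork_return_mem[OF ice u] .
  have "i \<in> Fplus M {u} ?c r" "j \<in> Fminus M {u} ?c r"
    using assms r by (auto simp: Fplus_def Fminus_def restrict_b_def)
  then have "?c i j > ?c r i \<and> ?c i j > ?c j r"
    using ice_fork_fork_at[OF ice u] unfolding is_fork_def by blast
  then show ?thesis using assms r by (simp add: restrict_b_def)
qed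

lemma ice_fork_oriented_triangle_through_return:
  assumes ice: "is_ice_fork M F b r" and u: "u \<in> F"
    and "x \<in> M \<union> {u}" "y \<in> M \<union> {u}" "z \<in> M \<union> {u}"
    and "b x y > 0" "b y z > 0" "b z x > 0"
  shows "r \<in> {x, y, z}"
  using fork_oriented_triangle_through_return[OF ice_fork_fork_at[OF ice u], of x y z] assms(3-)
  by (simp add: restrict_b_def)

lemma ice_fork_frozen_return:
  assumes ice: "is_ice_fork M F b r" and "r \<in> F"
  shows "F = {r}"
  using ice_fork_return_mem[OF ice] ice_fork_frozen_disjoint[OF ice] assms(2) by blast

definition signed_path_count :: "int \<Rightarrow> int \<Rightarrow> int" where
  "signed_path_count x y = (\<bar>x\<bar> * y + x * \<bar>y\<bar>) div 2"

lemma signed_path_count_cases: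
  "signed_path_count x y =
     (if x > 0 \<and> y > 0 then x * y else if x < 0 \<and> y < 0 then - (x * y) else 0)"
proof -
  have "\<bar>x\<bar> * y + x * \<bar>y\<bar> =
      (if x > 0 \<and> y > 0 then 2 * (x * y) else if x < 0 \<and> y < 0 then 2 * (- (x * y)) else 0)"
    by (auto simp: abs_if algebra_simps)
  moreover have "- (2 * z) div 2 = - z" for z :: int by presburger
  ultimately show ?thesis unfolding signed_path_count_def by simp
qed

lemma signed_path_count_commute: "signed_path_count x y = signed_path_count y x"
  by (simp add: signed_path_count_cases mult.commute)

lemma signed_path_count_uminus: "signed_path_count (- x) (- y) = - signed_path_count x y"
  by (simp add: signed_path_count_cases)

lemma mutate_eq:
  "mutate M F b j i k =
     (if i = j \<or> k = j then - b i k
      else if i \<in> F \<and> k \<in> F then 0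
      else b i k + signed_path_count (b i j) (b j k))"
  by (simp add: mutate_def signed_path_count_def)

lemma is_quiver_mutate:
  assumes q: "is_quiver M F b" and "j \<in> M"
  shows "is_quiver M F (mutate M F b j)"
proof -
  have skew: "b i k = - b k i" for i k using is_quiver_skew[OF q, of k i] by simp
  have outside: "b i k = 0" if "i \<notin> M \<union> F" for i k using q that unfolding is_quiver_def by blast
  have "j \<notin> F" using q assms(2) unfolding is_quiver_def by blast
  then have frozen: "mutate M F b j i k = 0" if "i \<in> F" "k \<in> F" for i k
    using that by (auto simp: mutate_eq)
  have "mutate M F b j i k = - mutate M F b j k i" for i k
    using skew[of i k] skew[of i j] skew[of j k]
    by (auto simp: mutate_eq signed_path_count_uminus signed_path_count_commute)
  moreover have "mutate M F b j i k = 0" if "i \<notin> M \<union> F" for i k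
    using outside[OF that] that assms(2) by (auto simp: mutate_eq signed_path_count_cases)
  ultimately show ?thesis using q frozen unfolding is_quiver_def by blast
qed

lemma mutate_uminus: "mutate M F (- b) j = - mutate M F b j"
  by (auto simp: fun_eq_iff mutate_eq signed_path_count_uminus)

lemma is_quiver_uminus: "is_quiver M F b \<Longrightarrow> is_quiver M F (- b)"
  unfolding is_quiver_def uminus_apply neg_equal_0_iff_equal by (metis minus_minus)

lemma arrows_on_uminus: "is_quiver M F c \<Longrightarrow> arrows_on (- c) S = (arrows_on c S)\<inverse>"
  by (auto simp: arrows_on_def is_quiver_skew)

lemma Fplus_uminus: "is_quiver M F c \<Longrightarrow> Fplus M F (- c) r = Fminus M F c r"
  by (auto simp: Fplus_def Fminus_def is_quiver_skew)

lemma Fminus_uminus: "is_quiver M F c \<Longrightarrow> Fminus M F (- c) r = Fplus M F c r"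
  by (auto simp: Fplus_def Fminus_def is_quiver_skew)

lemma is_fork_uminus:
  assumes fork: "is_fork M F c r"
  shows "is_fork M F (- c) r"
proof -
  have q: "is_quiver M F c" using fork unfolding is_fork_def by blast
  have "abundant M F (- c)" using fork by (simp add: is_fork_def abundant_def)
  moreover have "c i j > c r i \<and> c i j > c j r"
    if "i \<in> Fplus M F c r" "j \<in> Fminus M F c r" for i j
    using fork that unfolding is_fork_def by blast
  then have "(- c) i j > (- c) r i \<and> (- c) i j > (- c) j r"
    if "i \<in> Fplus M F (- c) r" "j \<in> Fminus M F (- c) r" for i j
    using that by (auto simp: Fplus_uminus[OF q] Fminus_uminus[OF q] is_quiver_skew[OF q])
  ultimately show ?thesis
    using fork is_quiver_uminus[OF q]
    by (simp add: is_fork_def arrows_on_uminus[OF q] Fplus_uminus[OF q] Fminus_uminus[OF q])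
qed

lemma restrict_b_uminus: "restrict_b (- b) S = - restrict_b b S"
  by (simp add: fun_eq_iff restrict_b_def)

lemma is_ice_fork_uminus: "is_ice_fork M F b r \<Longrightarrow> is_ice_fork M F (- b) r"
  by (simp add: is_ice_fork_def is_quiver_uminus is_fork_uminus restrict_b_uminus)

lemma is_red_uminus: "is_quiver M F c \<Longrightarrow> is_red M F (- c) k \<longleftrightarrow> is_green M F c k"
  unfolding is_red_def is_green_def uminus_apply neg_equal_0_iff_equal
  by (simp add: is_quiver_skew)

lemma is_green_uminus:
  assumes "is_quiver M F c"
  shows "is_green M F (- c) k \<longleftrightarrow> is_red M F c k"
proof -
  have "- (- c) = c" by (simp add: fun_eq_iff)
  then show ?thesis using is_red_uminus[OF is_quiver_uminus[OF assms], of k] by simp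
qed

lemma is_red_if_frozen_entries_neg:
  assumes q: "is_quiver M F c" and "F \<noteq> {}" "k \<in> M" and neg: "\<And>u. u \<in> F \<Longrightarrow> c k u < 0"
  shows "is_red M F c k"
proof -
  have "c u k > 0" if "u \<in> F" for u using neg[OF that] is_quiver_skew[OF q, of k u] by simp
  then show ?thesis using assms unfolding is_red_def by (metis ex_in_conv less_irrefl less_imp_le)
qed

lemma is_green_if_frozen_entries_pos:
  assumes "F \<noteq> {}" "k \<in> M" and pos: "\<And>u. u \<in> F \<Longrightarrow> c k u > 0"
  shows "is_green M F c k"
  using assms unfolding is_green_def by (metis ex_in_conv less_irrefl less_imp_le)

lemma ice_fork_paths_exceed_arrows:
  assumes ice: "is_ice_fork M F b r" and "j \<in> M" "k \<in> M" "u \<in> F" "v \<in> F"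
    and r: "r = k \<or> r = v"
    and kj: "b k j > 0" and jv: "b j v > 0" and "b u k > 0" "b v k > 0"
  shows "b j u > 0 \<and> b k j * b j u > b u k"
  using r
proof
  assume "r = k"
  then have "b j u > b k j \<and> b j u > b u k"
    using ice_fork_return_ineq[OF ice \<open>u \<in> F\<close>, of j u] assms(2,3,9) kj by auto
  moreover have "b k j * b j u \<ge> b j u" using kj calculation by simp
  ultimately show ?thesis using kj by linarith
next
  assume "r = v"
  then have "u = v" using ice_fork_frozen_return[OF ice] assms(4,5) by blast
  have "b k j > b v k" using ice_fork_return_ineq[OF ice \<open>v \<in> F\<close>, of k j] \<open>r = v\<close> assms(2,3,10) kj jv
    by auto
  moreover have "b k j * b j v \<ge> b k j" using kj jv by simp
  ultimately show ?thesis using jv unfolding \<open>u = v\<close> by linarith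
qed

lemma ice_fork_mutate_red_vertex:
  assumes ice: "is_ice_fork M F b r" and j: "j \<in> M" "j \<noteq> r" and k: "k \<in> M" "k \<noteq> j"
    and red: "is_red M F b k"
  shows "is_red M F (mutate M F b j) k \<or> is_green M F (mutate M F b j) k"
proof -
  have q: "is_quiver M F b" and F: "F \<noteq> {}" using ice unfolding is_ice_fork_def by blast+
  have arrow_in: "b u k > 0" if "u \<in> F" for u
  proof -
    have "b u k \<ge> 0" using red that unfolding is_red_def by blast
    moreover have "b k u \<noteq> 0" using ice_fork_frozen_adjacent[OF ice k(1) that] .
    ultimately show ?thesis using is_quiver_skew[OF q, of k u] by linarith
  qed
  have entry: "mutate M F b j k u = b k u + signed_path_count (b k j) (b j u)" if "u \<in> F" for u
  proof -
    have "u \<noteq> j" "k \<notin> F" using that j(1) k(1) ice_fork_frozen_disjoint[OF ice] by blast+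
    then show ?thesis using k(2) by (simp add: mutate_eq)
  qed
  show ?thesis
  proof (cases "b k j > 0 \<and> (\<exists>v\<in>F. b j v > 0)")
    case False
    have "mutate M F b j k u < 0" if "u \<in> F" for u
    proof -
      have "signed_path_count (b k j) (b j u) \<le> 0"
        using False that by (auto simp: signed_path_count_cases mult_neg_neg less_imp_le)
      then show ?thesis using entry[OF that] arrow_in[OF that] is_quiver_skew[OF q, of u k] by simp
    qed
    then show ?thesis using is_red_if_frozen_entries_neg[OF is_quiver_mutate[OF q j(1)] F k(1)] by blast
  next
    case True
    then obtain v where kj: "b k j > 0" and v: "v \<in> F" "b j v > 0" by blast
    have "v \<in> M \<union> {v}" "k \<in> M \<union> {v}" "j \<in> M \<union> {v}" using j k by auto
    then have "r \<in> {v, k, j}"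
      using ice_fork_oriented_triangle_through_return[OF ice v(1)] arrow_in[OF v(1)] kj v(2) by blast
    then have r: "r = k \<or> r = v" using j(2) by blast
    have "mutate M F b j k u > 0" if "u \<in> F" for u
      using ice_fork_paths_exceed_arrows[OF ice j(1) k(1) that v(1) r kj v(2) arrow_in[OF that]
          arrow_in[OF v(1)]] entry[OF that] kj is_quiver_skew[OF q, of u k]
      by (simp add: signed_path_count_cases)
    then show ?thesis using is_green_if_frozen_entries_pos[OF F k(1)] by blast
  qed
qed

theorem mainTheorem6:
  fixes M F :: "'v set" and b :: "'v \<Rightarrow> 'v \<Rightarrow> int" and r j k :: 'v
  assumes "is_ice_fork M F b r"
    and "j \<in> M" and "j \<noteq> r"
    and "k \<in> M" and "k \<noteq> j"
    and "is_red M F b k \<or> is_green M F b k"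
  shows "is_red M F (mutate M F b j) k \<or> is_green M F (mutate M F b j) k"
  using assms(6)
proof
  assume "is_red M F b k"
  then show ?thesis by (rule ice_fork_mutate_red_vertex[OF assms(1-5)])
next
  assume green: "is_green M F b k"
  have q: "is_quiver M F b" using assms(1) unfolding is_ice_fork_def by blast
  have q': "is_quiver M F (mutate M F b j)" using is_quiver_mutate[OF q assms(2)] .
  have "is_red M F (- b) k" using green unfolding is_red_uminus[OF q] .
  then have "is_red M F (mutate M F (- b) j) k \<or> is_green M F (mutate M F (- b) j) k"
    by (rule ice_fork_mutate_red_vertex[OF is_ice_fork_uminus[OF assms(1)] assms(2-5)])
  then show ?thesis
    unfolding mutate_uminus is_red_uminus[OF q'] is_green_uminus[OF q'] by blast
qed

end
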